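(* Let $G$ be a timed region graph, let $\mu\in\Delta_{\mathrm{Min}}$ be regionally constant, let $T$ be a regionally simple regional function and $D$ a regionally constant regional function. Then $\mathrm{Improve}_{\mathrm{Min}}(\mu,(T,D))$ is regionally constant.
   Context: Fix $k\in\mathbb N$. Let $C$ be a finite set of clocks. A clock valuation is a function $\nu:C\to[0,k]$; $V$ is the set of clock valuations. For $t\ge 0$ let $(\nu+t)(c)=\nu(c)+t$; for $C'\subseteq C$ let $\mathrm{Reset}(\nu,C')(c)=0$ if $c\in C'$ and $=\nu(c)$ otherwise. Simple clock constraints are $c\bowtie i$ or $c-c'\bowtie i$ with $c,c'\in C$, $i\in\{0,\dots,k\}$, ${\bowtie}\in\{<,>,=,\le,\ge\}$. A clock region is an equivalence class of $V$ under "satisfies the same simple clock constraints"; a clock zone is a convex union of clock regions. For a finite set $L$ of locations, a configuration is $s=(\ell,\nu)\in Q=L\times V$; write $s(c)=\nu(c)$ and $s+t=(\ell,\nu+t)$ (defined if $\nu+t\in V$). A region is $(\ell,P)$ (identified with $\{(\ell,\nu):\nu\in P\}$) for a clock region $P$; $[s]$ is the region containing $s$, $\mathcal R$ the set of regions, $\overline R$ the topological closure of $R$. A zone is a set $\{(\ell,\nu):\nu\in W_\ell\}$ with each $W_\ell$ a clock zone. A timed automaton $\mathcal T=(L,C,S,A,E,\delta,\rho,F)$ consists of finite $L$, finite $C$, a zone $S\subseteq Q$ of states, a finite set $A$ of actions, $E:A\to 2^S$ with every $E(a)$ a zone, $\delta:L\times A\to L$, $\rho:A\to 2^C$, and a zone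 $F\subseteq S$ of final states. For $s=(\ell,\nu)$: $s\to_t s'$ if $s'=s+t$ is defined and $s+t'\in S$ for all $t'\in[0,t]$; $s\xrightarrow{a}s'$ if $s'=(\delta(\ell,a),\mathrm{Reset}(\nu,\rho(a)))$, $s,s'\in S$ and $s\in E(a)$. For $(a,t)\in A\times\mathbb R_{\ge0}$, $\mathrm{Succ}(s,(a,t))=(\delta(\ell,a),\mathrm{Reset}(\nu+t,\rho(a)))$. A reachability-time game is $\Gamma=(\mathcal T,L_{\mathrm{Min}},L_{\mathrm{Max}})$ with $(L_{\mathrm{Min}},L_{\mathrm{Max}})$ a partition of $L$; $S_{\mathrm{Min}}$, $S_{\mathrm{Max}}$, $\mathcal R_{\mathrm{Min}}$, $\mathcal R_{\mathrm{Max}}$ are the states/regions with location in $L_{\mathrm{Min}}$ resp. $L_{\mathrm{Max}}$. Region relations: $R\to_*R'$ if there are $s\in R,s'\in R'$, $t\ge 0$ with $s\to_t s'$; $R\to_{+1}R'$ ($R'$ is the time successor of $R$) if $R\to_*R'$, $R\ne R'$, and $R\to_*R''\to_*R'$ implies $R''\in\{R,R'\}$; $R\xrightarrow aR'$ if there are $s\in R,s'\in R'$ with $s\xrightarrow a s'$. $R$ is thin if for all $s\in R$ and $\varepsilon>0$, $[s+\varepsilon]\neq[s]$. For thin $R''$, $b\in\{0,\dots,k\}$, $c\in C$: $R\to_{b,c}R''$ if $R\to_*R''$ and $s+(b-s(c))\in R''$ for all $s\in R$. Simple timed actions: $\mathcal A=A\times\{0,\dots,k\}\times C$; for $\alpha=(a,b,c)$,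 $t(s,\alpha)=b-s(c)$ if $s(c)\le b$ and $0$ otherwise, and $\mathrm{Succ}(s,\alpha)=\mathrm{Succ}(s,(a,t(s,\alpha)))$. For $F$ defined on $\overline{R'}$: $F^\oplus_\alpha(s)=t(s,\alpha)+F(\mathrm{Succ}(s,\alpha))$ and $F^\boxplus_\alpha(s)=1+F(\mathrm{Succ}(s,\alpha))$. Timed region graph $\widehat\Gamma=(\mathcal R,\mathcal M)$: $(R,\alpha,R')\in\mathcal M$ with $\alpha=(a,b,c)$ iff (i) $R\to_{b,c}R''\xrightarrow aR'$ for some $R''$; or (ii) $R\in\mathcal R_{\mathrm{Min}}$ and $R\to_{b,c}R''\to_{+1}R'''\xrightarrow aR'$ for some $R'',R'''$; or (iii) $R\in\mathcal R_{\mathrm{Max}}$ and $R\to_{b,c}R''$, $R'''\to_{+1}R''$, $R'''\xrightarrow aR'$ for some $R'',R'''$. (For $(R,\alpha,R')\in\mathcal M$ and $s\in R$, $\mathrm{Succ}(s,\alpha)\in\overline{R'}$.) Regional functions: maps $T$ assigning to each region $R$ a function $T(R):\overline R\to\mathbb R\cup\{\infty\}$ (resp. $D(R):\overline R\to\mathbb N\cup\{\infty\}$); $\widetilde T(s)=T([s])(s)$. $T$ is regionally simple (regionally constant) if each $T(R)$ is simple (constant), where $F:X\to\mathbb R$ is simple if $F\equiv e$ for some $e\in\mathbb Z$ or $F(s)=e-s(c)$ for some $e\in\mathbb Z$, $c\in C$. Lexicographic order: $(x,y)\le^{\mathrm{lex}}(x',y')$ iff $x<x'$, or $x=x'$ and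 $y\le y'$. Strategies in graphs: for a graph $G=(\mathcal R,\mathcal M')$, $\mathcal M'\subseteq\mathcal M$, a positional strategy for Min is a map $\mu:S_{\mathrm{Min}}\to\mathcal M'$ with $\mu(s)$ of the form $([s],\alpha,R)$; $\Delta_{\mathrm{Min}}$ is the set of these. A strategy is regionally constant if $[s]=[s']$ implies equal values. For $s\in S$ let $M_*(s,(T,D))$ be the set of moves $m=([s],\alpha,R')$ of $G$ at which $(T(R')^\oplus_\alpha(s),D(R')^\boxplus_\alpha(s))$ is lexicographically minimal. Fix a function $\mathrm{Choose}$ selecting an element of each nonempty set of moves. $\mathrm{Improve}_{\mathrm{Min}}(\mu,(T,D))(s)=\mu(s)$ if $\mu(s)\in M_*(s,(T,D))$, and $=\mathrm{Choose}(M_*(s,(T,D)))$ otherwise. *)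

theory Defs
  imports "HOL-Analysis.Analysis" "HOL-Library.Extended_Real" "HOL-Library.Extended_Nat"
begin

type_synonym ('l,'c) config = "'l \<times> ('c \<Rightarrow> real)"
type_synonym ('l,'c) region = "('l,'c) config set"
type_synonym ('l,'c,'a) move = "('l,'c) region \<times> ('a \<times> nat \<times> 'c) \<times> ('l,'c) region"

definition valuations :: "nat \<Rightarrow> ('c \<Rightarrow> real) set" where
  "valuations k = {\<nu>. \<forall>c. 0 \<le> \<nu> c \<and> \<nu> c \<le> real k}"

datatype cmp = CLt | CGt | CEq | CLe | CGe

fun cmp_sem :: "cmp \<Rightarrow> real \<Rightarrow> real \<Rightarrow> bool" where
  "cmp_sem CLt x y = (x < y)"
| "cmp_sem CGt x y = (x > y)"
| "cmp_sem CEq x y = (x = y)"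
| "cmp_sem CLe x y = (x \<le> y)"
| "cmp_sem CGe x y = (x \<ge> y)"

datatype 'c clock_constraint = Single 'c cmp nat | Diff 'c 'c cmp nat

fun cc_sat :: "('c \<Rightarrow> real) \<Rightarrow> 'c clock_constraint \<Rightarrow> bool" where
  "cc_sat \<nu> (Single c r i) = cmp_sem r (\<nu> c) (real i)"
| "cc_sat \<nu> (Diff c c' r i) = cmp_sem r (\<nu> c - \<nu> c') (real i)"

fun cc_bound :: "'c clock_constraint \<Rightarrow> nat" where
  "cc_bound (Single c r i) = i"
| "cc_bound (Diff c c' r i) = i"

definition simple_cc :: "nat \<Rightarrow> 'c clock_constraint \<Rightarrow> bool" where
  "simple_cc k g \<longleftrightarrow> cc_bound g \<le> k"

definition clock_equiv :: "nat \<Rightarrow> ('c \<Rightarrow> real) \<Rightarrow> ('c \<Rightarrow> real) \<Rightarrow> bool" where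
  "clock_equiv k \<nu> \<nu>' \<longleftrightarrow> \<nu> \<in> valuations k \<and> \<nu>' \<in> valuations k \<and>
     (\<forall>g. simple_cc k g \<longrightarrow> (cc_sat \<nu> g \<longleftrightarrow> cc_sat \<nu>' g))"

definition clock_regions :: "nat \<Rightarrow> ('c \<Rightarrow> real) set set" where
  "clock_regions k = valuations k // {(\<nu>, \<nu>'). clock_equiv k \<nu> \<nu>'}"

definition convex_valset :: "('c \<Rightarrow> real) set \<Rightarrow> bool" where
  "convex_valset W \<longleftrightarrow> (\<forall>x\<in>W. \<forall>y\<in>W. \<forall>u::real. 0 \<le> u \<and> u \<le> 1 \<longrightarrow>
      (\<lambda>c. (1 - u) * x c + u * y c) \<in> W)"

definition clock_zone :: "nat \<Rightarrow> ('c \<Rightarrow> real) set \<Rightarrow> bool" where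
  "clock_zone k W \<longleftrightarrow> (\<exists>X \<subseteq> clock_regions k. W = \<Union>X) \<and> convex_valset W"

definition zone :: "nat \<Rightarrow> ('l,'c) config set \<Rightarrow> bool" where
  "zone k Z \<longleftrightarrow> (\<exists>W. (\<forall>l. clock_zone k (W l)) \<and> Z = {(l, \<nu>). \<nu> \<in> W l})"

definition regions :: "nat \<Rightarrow> ('l,'c) region set" where
  "regions k = {Pair l ` P | l P. P \<in> clock_regions k}"

(* [s]; empty if s is not a configuration (e.g. s + t undefined) *)
definition region_of :: "nat \<Rightarrow> ('l,'c) config \<Rightarrow> ('l,'c) region" where
  "region_of k s = {(l', \<nu>'). l' = fst s \<and> clock_equiv k (snd s) \<nu>'}"

(* topological closure of a region (locations carry the discrete topology) *)
definition rclosure :: "('l,'c) region \<Rightarrow> ('l,'c) config set" where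
  "rclosure R = {(l, \<nu>). \<nu> \<in> closure {\<nu>'. (l, \<nu>') \<in> R}}"

definition shift :: "('l,'c) config \<Rightarrow> real \<Rightarrow> ('l,'c) config" where
  "shift s t = (fst s, \<lambda>c. snd s c + t)"

definition reset :: "('c \<Rightarrow> real) \<Rightarrow> 'c set \<Rightarrow> ('c \<Rightarrow> real)" where
  "reset \<nu> C' = (\<lambda>c. if c \<in> C' then 0 else \<nu> c)"

record ('l,'c,'a) timed_automaton =
  States :: "('l,'c) config set"
  Enabled :: "'a \<Rightarrow> ('l,'c) config set"
  delta :: "'l \<Rightarrow> 'a \<Rightarrow> 'l"
  rho :: "'a \<Rightarrow> 'c set"
  Final :: "('l,'c) config set"

definition valid_ta :: "nat \<Rightarrow> ('l,'c,'a) timed_automaton \<Rightarrow> bool" where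
  "valid_ta k TA \<longleftrightarrow> zone k (States TA) \<and>
     (\<forall>a. Enabled TA a \<subseteq> States TA \<and> zone k (Enabled TA a)) \<and>
     Final TA \<subseteq> States TA \<and> zone k (Final TA)"

definition delay_step :: "nat \<Rightarrow> ('l,'c,'a) timed_automaton \<Rightarrow> ('l,'c) config \<Rightarrow> real \<Rightarrow> ('l,'c) config \<Rightarrow> bool" where
  "delay_step k TA s t s' \<longleftrightarrow> 0 \<le> t \<and> snd (shift s t) \<in> valuations k \<and> s' = shift s t \<and>
     (\<forall>t'\<in>{0..t}. shift s t' \<in> States TA)"

definition action_step :: "('l,'c,'a) timed_automaton \<Rightarrow> ('l,'c) config \<Rightarrow> 'a \<Rightarrow> ('l,'c) config \<Rightarrow> bool" where
  "action_step TA s a s' \<longleftrightarrow> s' = (delta TA (fst s) a, reset (snd s) (rho TA a)) \<and>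
     s \<in> States TA \<and> s' \<in> States TA \<and> s \<in> Enabled TA a"

definition succ :: "('l,'c,'a) timed_automaton \<Rightarrow> ('l,'c) config \<Rightarrow> 'a \<Rightarrow> real \<Rightarrow> ('l,'c) config" where
  "succ TA s a t = (delta TA (fst s) a, reset (snd (shift s t)) (rho TA a))"

definition reach_star :: "nat \<Rightarrow> ('l,'c,'a) timed_automaton \<Rightarrow> ('l,'c) region \<Rightarrow> ('l,'c) region \<Rightarrow> bool" where
  "reach_star k TA R R' \<longleftrightarrow> (\<exists>s\<in>R. \<exists>s'\<in>R'. \<exists>t\<ge>0. delay_step k TA s t s')"

definition time_succ :: "nat \<Rightarrow> ('l,'c,'a) timed_automaton \<Rightarrow> ('l,'c) region \<Rightarrow> ('l,'c) region \<Rightarrow> bool" where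
  "time_succ k TA R R' \<longleftrightarrow> reach_star k TA R R' \<and> R \<noteq> R' \<and>
     (\<forall>R''\<in>regions k. reach_star k TA R R'' \<and> reach_star k TA R'' R' \<longrightarrow> R'' \<in> {R, R'})"

definition thin :: "nat \<Rightarrow> ('l,'c) region \<Rightarrow> bool" where
  "thin k R \<longleftrightarrow> (\<forall>s\<in>R. \<forall>\<epsilon>>0. region_of k (shift s \<epsilon>) \<noteq> region_of k s)"

definition reach_bc :: "nat \<Rightarrow> ('l,'c,'a) timed_automaton \<Rightarrow> ('l,'c) region \<Rightarrow> nat \<Rightarrow> 'c \<Rightarrow> ('l,'c) region \<Rightarrow> bool" where
  "reach_bc k TA R b c R'' \<longleftrightarrow> thin k R'' \<and> b \<le> k \<and> reach_star k TA R R'' \<and>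
     (\<forall>s\<in>R. shift s (real b - snd s c) \<in> R'')"

definition region_action :: "('l,'c,'a) timed_automaton \<Rightarrow> ('l,'c) region \<Rightarrow> 'a \<Rightarrow> ('l,'c) region \<Rightarrow> bool" where
  "region_action TA R a R' \<longleftrightarrow> (\<exists>s\<in>R. \<exists>s'\<in>R'. action_step TA s a s')"

definition min_region :: "'l set \<Rightarrow> ('l,'c) region \<Rightarrow> bool" where
  "min_region Lmin R \<longleftrightarrow> R \<subseteq> {s. fst s \<in> Lmin}"

definition max_region :: "'l set \<Rightarrow> ('l,'c) region \<Rightarrow> bool" where
  "max_region Lmin R \<longleftrightarrow> R \<subseteq> {s. fst s \<notin> Lmin}"

(* the move set \<M> of the timed region graph; L_Max = - Lmin *)
definition moves :: "nat \<Rightarrow> ('l,'c,'a) timed_automaton \<Rightarrow> 'l set \<Rightarrow> ('l,'c,'a) move set" where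
  "moves k TA Lmin = {(R, (a, b, c), R') | R a b c R'. R \<in> regions k \<and> R' \<in> regions k \<and>
     ((\<exists>R''\<in>regions k. reach_bc k TA R b c R'' \<and> region_action TA R'' a R')
    \<or> (min_region Lmin R \<and> (\<exists>R''\<in>regions k. \<exists>R'''\<in>regions k.
          reach_bc k TA R b c R'' \<and> time_succ k TA R'' R''' \<and> region_action TA R''' a R'))
    \<or> (max_region Lmin R \<and> (\<exists>R''\<in>regions k. \<exists>R'''\<in>regions k.
          reach_bc k TA R b c R'' \<and> time_succ k TA R''' R'' \<and> region_action TA R''' a R')))}"

definition tdelay :: "('l,'c) config \<Rightarrow> ('a \<times> nat \<times> 'c) \<Rightarrow> real" where
  "tdelay s \<alpha> = (case \<alpha> of (a, b, c) \<Rightarrow> if snd s c \<le> real b then real b - snd s c else 0)"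

definition succ_alpha :: "('l,'c,'a) timed_automaton \<Rightarrow> ('l,'c) config \<Rightarrow> ('a \<times> nat \<times> 'c) \<Rightarrow> ('l,'c) config" where
  "succ_alpha TA s \<alpha> = succ TA s (fst \<alpha>) (tdelay s \<alpha>)"

definition oplus :: "('l,'c,'a) timed_automaton \<Rightarrow> (('l,'c) config \<Rightarrow> ereal) \<Rightarrow> ('a \<times> nat \<times> 'c) \<Rightarrow> ('l,'c) config \<Rightarrow> ereal" where
  "oplus TA F \<alpha> s = ereal (tdelay s \<alpha>) + F (succ_alpha TA s \<alpha>)"

definition boxplus :: "('l,'c,'a) timed_automaton \<Rightarrow> (('l,'c) config \<Rightarrow> enat) \<Rightarrow> ('a \<times> nat \<times> 'c) \<Rightarrow> ('l,'c) config \<Rightarrow> enat" where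
  "boxplus TA F \<alpha> s = 1 + F (succ_alpha TA s \<alpha>)"

definition lex_le :: "ereal \<times> enat \<Rightarrow> ereal \<times> enat \<Rightarrow> bool" where
  "lex_le p q \<longleftrightarrow> fst p < fst q \<or> (fst p = fst q \<and> snd p \<le> snd q)"

definition move_value :: "('l,'c,'a) timed_automaton \<Rightarrow> (('l,'c) region \<Rightarrow> ('l,'c) config \<Rightarrow> ereal)
    \<Rightarrow> (('l,'c) region \<Rightarrow> ('l,'c) config \<Rightarrow> enat) \<Rightarrow> ('l,'c) config \<Rightarrow> ('l,'c,'a) move \<Rightarrow> ereal \<times> enat" where
  "move_value TA T D s m = (case m of (R, \<alpha>, R') \<Rightarrow> (oplus TA (T R') \<alpha> s, boxplus TA (D R') \<alpha> s))"

definition M_star :: "nat \<Rightarrow> ('l,'c,'a) timed_automaton \<Rightarrow> ('l,'c,'a) move set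
    \<Rightarrow> (('l,'c) region \<Rightarrow> ('l,'c) config \<Rightarrow> ereal) \<Rightarrow> (('l,'c) region \<Rightarrow> ('l,'c) config \<Rightarrow> enat)
    \<Rightarrow> ('l,'c) config \<Rightarrow> ('l,'c,'a) move set" where
  "M_star k TA M' T D s = {m \<in> M'. fst m = region_of k s \<and>
     (\<forall>m'\<in>M'. fst m' = region_of k s \<longrightarrow> lex_le (move_value TA T D s m) (move_value TA T D s m'))}"

definition improve_min :: "nat \<Rightarrow> ('l,'c,'a) timed_automaton \<Rightarrow> ('l,'c,'a) move set
    \<Rightarrow> (('l,'c,'a) move set \<Rightarrow> ('l,'c,'a) move) \<Rightarrow> (('l,'c) config \<Rightarrow> ('l,'c,'a) move)
    \<Rightarrow> (('l,'c) region \<Rightarrow> ('l,'c) config \<Rightarrow> ereal) \<Rightarrow> (('l,'c) region \<Rightarrow> ('l,'c) config \<Rightarrow> enat)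
    \<Rightarrow> ('l,'c) config \<Rightarrow> ('l,'c,'a) move" where
  "improve_min k TA M' Choose \<mu> T D s =
     (if \<mu> s \<in> M_star k TA M' T D s then \<mu> s else Choose (M_star k TA M' T D s))"

definition S_Min :: "('l,'c,'a) timed_automaton \<Rightarrow> 'l set \<Rightarrow> ('l,'c) config set" where
  "S_Min TA Lmin = {s \<in> States TA. fst s \<in> Lmin}"

definition min_strategy :: "nat \<Rightarrow> ('l,'c,'a) timed_automaton \<Rightarrow> 'l set \<Rightarrow> ('l,'c,'a) move set
    \<Rightarrow> (('l,'c) config \<Rightarrow> ('l,'c,'a) move) \<Rightarrow> bool" where
  "min_strategy k TA Lmin M' \<mu> \<longleftrightarrow> (\<forall>s\<in>S_Min TA Lmin. \<mu> s \<in> M' \<and> fst (\<mu> s) = region_of k s)"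

definition regionally_constant_strategy :: "nat \<Rightarrow> ('l,'c,'a) timed_automaton \<Rightarrow> 'l set
    \<Rightarrow> (('l,'c) config \<Rightarrow> ('l,'c,'a) move) \<Rightarrow> bool" where
  "regionally_constant_strategy k TA Lmin \<mu> \<longleftrightarrow>
     (\<forall>s\<in>S_Min TA Lmin. \<forall>s'\<in>S_Min TA Lmin. region_of k s = region_of k s' \<longrightarrow> \<mu> s = \<mu> s')"

definition regionally_simple :: "nat \<Rightarrow> (('l,'c) region \<Rightarrow> ('l,'c) config \<Rightarrow> ereal) \<Rightarrow> bool" where
  "regionally_simple k T \<longleftrightarrow> (\<forall>R\<in>regions k.
     (\<exists>e::int. \<forall>s\<in>rclosure R. T R s = ereal (real_of_int e))
   \<or> (\<exists>(e::int) c. \<forall>s\<in>rclosure R. T R s = ereal (real_of_int e - snd s c)))"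

definition regionally_constant_fun :: "nat \<Rightarrow> (('l,'c) region \<Rightarrow> ('l,'c) config \<Rightarrow> 'b) \<Rightarrow> bool" where
  "regionally_constant_fun k D \<longleftrightarrow> (\<forall>R\<in>regions k. \<exists>d. \<forall>s\<in>rclosure R. D R s = d)"

end

theory Submission
  imports Defs
begin

(*
  The value of a move m = (R, (a,b,c), R') at a configuration s \<in> R is a pair
  (delay + T R' (Succ s), 1 + D R' (Succ s)).  The successor lands in the closure
  of R', where T R' is simple and D R' is constant; since moreover the delay is
  b - s(c), the first component has the form E - s(C) for an integer E and a
  clock C, and the second component is a constant, both independent of s.
  Comparing two such pairs lexicographically amounts to comparing a clock
  difference s(C2) - s(C1) with an integer, which does not depend on the choice
  of s inside its region.  Hence the set M_* of optimal moves is the same for all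
  configurations of a region, and so is the improved strategy.
*)

section \<open>Position of a real number relative to the integers\<close>

text \<open>Two reals are integer-equivalent if they compare in the same way with every
  integer; region equivalence is this relation applied to clocks and clock
  differences.\<close>

definition int_equiv :: "real \<Rightarrow> real \<Rightarrow> bool" where
  "int_equiv a b \<longleftrightarrow> (\<forall>j::int. (a < j \<longleftrightarrow> b < j) \<and> (a = j \<longleftrightarrow> b = j))"

lemma int_equiv_refl [simp]: "int_equiv a a"
  by (simp add: int_equiv_def)

lemma int_equiv_sym: "int_equiv a b \<Longrightarrow> int_equiv b a"
  by (simp add: int_equiv_def)

lemma int_equiv_trans: "int_equiv a b \<Longrightarrow> int_equiv b c \<Longrightarrow> int_equiv a c"
  by (simp add: int_equiv_def)

lemma int_equiv_uminus: "int_equiv a b \<Longrightarrow> int_equiv (- a) (- b)"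
  unfolding int_equiv_def
proof (intro allI)
  fix j :: int
  assume "\<forall>j::int. (a < j \<longleftrightarrow> b < j) \<and> (a = j \<longleftrightarrow> b = j)"
  from this[rule_format, of "- j"]
  show "(- a < j \<longleftrightarrow> - b < j) \<and> (- a = j \<longleftrightarrow> - b = j)" by auto
qed

lemma int_equiv_cmp_sem:
  assumes "int_equiv a b" shows "cmp_sem r a (real i) \<longleftrightarrow> cmp_sem r b (real i)"
  using assms[unfolded int_equiv_def, rule_format, of "int i"] by (cases r) auto

lemma int_equiv_of_window:
  fixes a b lo hi :: real
  assumes window: "\<And>j::int. lo \<le> j \<Longrightarrow> j \<le> hi \<Longrightarrow> (a < j \<longleftrightarrow> b < j) \<and> (a = j \<longleftrightarrow> b = j)"
    and "lo \<le> a" "a \<le> hi" "lo \<le> b" "b \<le> hi"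
  shows "int_equiv a b"
  unfolding int_equiv_def
proof
  fix j :: int
  consider "j < lo" | "lo \<le> j \<and> j \<le> hi" | "hi < j" by linarith
  then show "(a < j \<longleftrightarrow> b < j) \<and> (a = j \<longleftrightarrow> b = j)"
    by cases (use window assms(2-5) in auto)
qed

lemma int_equiv_floor:
  assumes "int_equiv a b" shows "floor b = floor a"
proof -
  have "\<not> a < of_int (floor a)" "a < of_int (floor a + 1)" by linarith+
  then have "\<not> b < of_int (floor a)" "b < of_int (floor a + 1)"
    using assms unfolding int_equiv_def by blast+
  then show ?thesis by (intro floor_unique) auto
qed

text \<open>Integer-equivalence survives a common small translation: either both numbers
  are the same integer, or both lie strictly inside the same unit interval.\<close>

lemma int_equiv_translate:
  assumes "int_equiv a b"
  shows "\<exists>\<delta>>0. \<forall>u. \<bar>u\<bar> < \<delta> \<longrightarrow> int_equiv (a + u) (b + u)"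
proof (cases "a = of_int (floor a)")
  case True
  then have "b = a" using assms unfolding int_equiv_def by metis
  then show ?thesis by (intro exI[of _ 1]) auto
next
  case False
  define f where "f = floor a"
  have "floor b = f" using int_equiv_floor[OF assms] f_def by simp
  moreover have "b \<noteq> of_int f" using False assms unfolding int_equiv_def f_def by metis
  ultimately have inside: "f < a" "a < f + 1" "f < b" "b < f + 1"
    using False unfolding f_def by linarith+
  define \<delta> where "\<delta> = min (min (a - f) (f + 1 - a)) (min (b - f) (f + 1 - b))"
  show ?thesis
  proof (intro exI[of _ \<delta>] conjI allI impI)
    show "\<delta> > 0" using inside unfolding \<delta>_def by auto
    fix u :: real assume "\<bar>u\<bar> < \<delta>"
    then have shifted: "f < a + u" "a + u < f + 1" "f < b + u" "b + u < f + 1"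
      unfolding \<delta>_def by (auto simp: abs_less_iff)
    show "int_equiv (a + u) (b + u)"
      unfolding int_equiv_def
    proof
      fix j :: int
      have "real_of_int j \<le> of_int f \<or> of_int f + 1 \<le> real_of_int j"
        by (metis of_int_1 of_int_add of_int_le_iff zless_imp_add1_zle not_le)
      then show "(a + u < j \<longleftrightarrow> b + u < j) \<and> (a + u = j \<longleftrightarrow> b + u = j)"
        using shifted by auto
    qed
  qed
qed

section \<open>An explicit description of region equivalence\<close>

definition region_equiv :: "nat \<Rightarrow> ('c \<Rightarrow> real) \<Rightarrow> ('c \<Rightarrow> real) \<Rightarrow> bool" where
  "region_equiv k x y \<longleftrightarrow> x \<in> valuations k \<and> y \<in> valuations k \<and>
     (\<forall>c. int_equiv (x c) (y c)) \<and> (\<forall>c c'. int_equiv (x c - x c') (y c - y c'))"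

text \<open>Agreement on all simple clock constraints pins down the integer position of
  every clock (window [0,k]) and every clock difference (window [-k,k]).\<close>

lemma clock_equiv_imp_region_equiv:
  assumes "clock_equiv k x y" shows "region_equiv k x y"
proof -
  from assms have vx: "x \<in> valuations k" and vy: "y \<in> valuations k"
    and agree: "\<And>g. simple_cc k g \<Longrightarrow> cc_sat x g = cc_sat y g"
    unfolding clock_equiv_def by auto
  have bounds: "0 \<le> x c" "x c \<le> k" "0 \<le> y c" "y c \<le> k" for c
    using vx vy by (auto simp: valuations_def)
  have clocks: "int_equiv (x c) (y c)" for c
  proof (rule int_equiv_of_window[where lo = 0 and hi = "real k"])
    fix j :: int assume "0 \<le> real_of_int j" "real_of_int j \<le> real k"
    then obtain i where i: "j = int i" "i \<le> k"
      by (intro that[of "nat j"]) auto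
    have "simple_cc k (Single c CLt i)" "simple_cc k (Single c CEq i)" using i by (auto simp: simple_cc_def)
    from agree[OF this(1)] agree[OF this(2)]
    show "(x c < j \<longleftrightarrow> y c < j) \<and> (x c = j \<longleftrightarrow> y c = j)" using i by auto
  qed (use bounds in auto)
  have differences: "int_equiv (x c - x c') (y c - y c')" for c c'
  proof (rule int_equiv_of_window[where lo = "- real k" and hi = "real k"])
    fix j :: int assume j: "- real k \<le> real_of_int j" "real_of_int j \<le> real k"
    show "(x c - x c' < j \<longleftrightarrow> y c - y c' < j) \<and> (x c - x c' = j \<longleftrightarrow> y c - y c' = j)"
    proof (cases "j \<ge> 0")
      case True
      then obtain i where i: "j = int i" "i \<le> k"
        using j by (intro that[of "nat j"]) auto
      have "simple_cc k (Diff c c' CLt i)" "simple_cc k (Diff c c' CEq i)" using i by (auto simp: simple_cc_def)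
      from agree[OF this(1)] agree[OF this(2)] show ?thesis using i by auto
    next
      case False
      then obtain i where i: "j = - int i" "i \<le> k"
        using j by (intro that[of "nat (- j)"]) auto
      have "simple_cc k (Diff c' c CGt i)" "simple_cc k (Diff c' c CEq i)" using i by (auto simp: simple_cc_def)
      from agree[OF this(1)] agree[OF this(2)] show ?thesis using i by auto
    qed
  qed (use bounds[of c] bounds[of c'] in auto)
  show ?thesis unfolding region_equiv_def using vx vy clocks differences by auto
qed

lemma region_equiv_imp_clock_equiv:
  fixes x y :: "'c \<Rightarrow> real"
  assumes "region_equiv k x y" shows "clock_equiv k x y"
  unfolding clock_equiv_def
proof (intro conjI allI impI)
  show "x \<in> valuations k" "y \<in> valuations k" using assms by (auto simp: region_equiv_def)
  fix g :: "'c clock_constraint"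
  show "cc_sat x g = cc_sat y g"
    using assms by (cases g) (auto simp: region_equiv_def intro!: int_equiv_cmp_sem)
qed

lemma clock_equiv_iff_region_equiv: "clock_equiv k x y \<longleftrightarrow> region_equiv k x y"
  using clock_equiv_imp_region_equiv region_equiv_imp_clock_equiv by blast

lemma region_equiv_refl: "x \<in> valuations k \<Longrightarrow> region_equiv k x x"
  by (simp add: region_equiv_def)

lemma region_equiv_sym: "region_equiv k x y \<Longrightarrow> region_equiv k y x"
  by (auto simp: region_equiv_def intro: int_equiv_sym)

lemma region_equiv_trans: "region_equiv k x y \<Longrightarrow> region_equiv k y z \<Longrightarrow> region_equiv k x z"
  unfolding region_equiv_def by (metis int_equiv_trans)

lemma region_equiv_reset:
  assumes "region_equiv k x y" shows "region_equiv k (reset x C) (reset y C)"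
proof -
  have "reset x C \<in> valuations k" "reset y C \<in> valuations k"
    using assms by (auto simp: region_equiv_def valuations_def reset_def)
  moreover have "int_equiv (reset x C c) (reset y C c)" for c
    using assms by (auto simp: region_equiv_def reset_def)
  moreover have "int_equiv (reset x C c - reset x C c') (reset y C c - reset y C c')" for c c'
    using assms int_equiv_uminus[of "x c'" "y c'"] by (auto simp: region_equiv_def reset_def)
  ultimately show ?thesis by (simp add: region_equiv_def)
qed

text \<open>Clock differences are unaffected by delays.\<close>

lemma region_equiv_delay:
  fixes x y :: "'c::finite \<Rightarrow> real"
  assumes "region_equiv k x y"
  shows "\<exists>\<delta>>0. \<forall>u. \<bar>u\<bar> < \<delta> \<and> (\<lambda>c. x c + u) \<in> valuations k
           \<longrightarrow> region_equiv k (\<lambda>c. x c + u) (\<lambda>c. y c + u)"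
proof -
  have "\<forall>c. \<exists>\<delta>>0. \<forall>u. \<bar>u\<bar> < \<delta> \<longrightarrow> int_equiv (x c + u) (y c + u)"
    using assms int_equiv_translate unfolding region_equiv_def by blast
  then obtain \<delta>c where \<delta>c: "\<And>c. \<delta>c c > 0" "\<And>c u. \<bar>u\<bar> < \<delta>c c \<Longrightarrow> int_equiv (x c + u) (y c + u)"
    by metis
  define \<delta> where "\<delta> = Min (range \<delta>c)"
  have \<delta>_pos: "\<delta> > 0" unfolding \<delta>_def using \<delta>c(1) by (subst Min_gr_iff) auto
  have \<delta>_le: "\<delta> \<le> \<delta>c c" for c unfolding \<delta>_def by (rule Min_le) auto
  show ?thesis
  proof (intro exI[of _ \<delta>] conjI allI impI \<delta>_pos)
    fix u assume u: "\<bar>u\<bar> < \<delta> \<and> (\<lambda>c. x c + u) \<in> valuations k"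
    have clocks: "int_equiv (x c + u) (y c + u)" for c using \<delta>c(2)[of u c] \<delta>_le[of c] u by auto
    have "(\<lambda>c. y c + u) \<in> valuations k"
      unfolding valuations_def
    proof (intro CollectI allI conjI)
      fix c
      have "0 \<le> x c + u" "x c + u \<le> k" using u by (auto simp: valuations_def)
      moreover have "x c + u < of_int 0 \<longleftrightarrow> y c + u < of_int 0"
        "x c + u < of_int (int k) \<longleftrightarrow> y c + u < of_int (int k)"
        "x c + u = of_int (int k) \<longleftrightarrow> y c + u = of_int (int k)"
        using clocks[of c] unfolding int_equiv_def by blast+
      ultimately show "0 \<le> y c + u" "y c + u \<le> k" by auto
    qed
    then show "region_equiv k (\<lambda>c. x c + u) (\<lambda>c. y c + u)"
      using u clocks assms by (auto simp: region_equiv_def)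
  qed
qed

section \<open>Regions as equivalence classes\<close>

lemma mem_region_of: "s \<in> region_of k s' \<longleftrightarrow> fst s = fst s' \<and> region_equiv k (snd s') (snd s)"
  by (cases s) (auto simp: region_of_def clock_equiv_iff_region_equiv)

lemma regions_iff: "R \<in> regions k \<longleftrightarrow> (\<exists>s. snd s \<in> valuations k \<and> R = region_of k s)"
proof
  assume "R \<in> regions k"
  then obtain l P where R: "R = Pair l ` P" "P \<in> clock_regions k" unfolding regions_def by auto
  then obtain \<nu> where \<nu>: "\<nu> \<in> valuations k" "P = {\<nu>'. clock_equiv k \<nu> \<nu>'}"
    unfolding clock_regions_def quotient_def by auto
  have "R = region_of k (l, \<nu>)" unfolding R \<nu> region_of_def by auto
  then show "\<exists>s. snd s \<in> valuations k \<and> R = region_of k s" using \<nu> by (intro exI[of _ "(l, \<nu>)"]) auto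
next
  assume "\<exists>s. snd s \<in> valuations k \<and> R = region_of k s"
  then obtain l \<nu> where \<nu>: "\<nu> \<in> valuations k" "R = region_of k (l, \<nu>)" by auto
  have "{\<nu>'. clock_equiv k \<nu> \<nu>'} \<in> clock_regions k"
    unfolding clock_regions_def quotient_def using \<nu>(1) by auto
  moreover have "R = Pair l ` {\<nu>'. clock_equiv k \<nu> \<nu>'}" unfolding \<nu> region_of_def by auto
  ultimately show "R \<in> regions k" unfolding regions_def by blast
qed

lemma region_of_in_regions: "snd s \<in> valuations k \<Longrightarrow> region_of k s \<in> regions k"
  using regions_iff by blast

lemma mem_own_region: "snd s \<in> valuations k \<Longrightarrow> s \<in> region_of k s"
  by (simp add: mem_region_of region_equiv_refl)

lemma region_eq_region_of:
  assumes "R \<in> regions k" "s \<in> R" shows "R = region_of k s" "snd s \<in> valuations k"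
proof -
  obtain s0 where s0: "R = region_of k s0" using assms(1) regions_iff by blast
  have equiv: "fst s = fst s0" "region_equiv k (snd s0) (snd s)" using assms(2) s0 by (auto simp: mem_region_of)
  then show "snd s \<in> valuations k" by (simp add: region_equiv_def)
  show "R = region_of k s"
    unfolding s0 mem_region_of set_eq_iff
    using equiv region_equiv_sym region_equiv_trans by metis
qed

lemma region_members_equiv:
  assumes "R \<in> regions k" "s \<in> R" "s' \<in> R" shows "fst s = fst s'" "region_equiv k (snd s) (snd s')"
  using region_eq_region_of[OF assms(1,2)] assms(3) by (auto simp: mem_region_of)

lemma states_in_valuations:
  assumes "valid_ta k TA" "s \<in> States TA" shows "snd s \<in> valuations k"
proof -
  obtain W where W: "\<forall>l. clock_zone k (W l)" "States TA = {(l, \<nu>). \<nu> \<in> W l}"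
    using assms(1) unfolding valid_ta_def zone_def by blast
  obtain X where X: "X \<subseteq> clock_regions k" "W (fst s) = \<Union>X" using W(1) unfolding clock_zone_def by blast
  have "snd s \<in> W (fst s)" using assms(2) W(2) by (cases s) auto
  then obtain P where "P \<in> X" "snd s \<in> P" using X by auto
  then show ?thesis using X(1) unfolding clock_regions_def quotient_def by (auto simp: clock_equiv_def)
qed

section \<open>Delays and actions on regions\<close>

lemma shift_shift [simp]: "shift (shift s a) b = shift s (a + b)"
  by (simp add: shift_def add.assoc)

lemma shift_0 [simp]: "shift s 0 = s"
  by (simp add: shift_def)

lemma fst_shift [simp]: "fst (shift s t) = fst s"
  by (simp add: shift_def)

lemma snd_shift: "snd (shift s t) = (\<lambda>c. snd s c + t)"
  by (simp add: shift_def)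

lemma shift_valuation_between:
  assumes "snd x \<in> valuations k" "snd (shift x t) \<in> valuations k" "0 \<le> u" "u \<le> t"
  shows "snd (shift x u) \<in> valuations k"
  using assms unfolding valuations_def snd_shift
  by (auto, smt (verit, best))

text \<open>The outcome of an action from a region R0 into R' lands in R' from every
  configuration of R0: resets respect region equivalence.\<close>

lemma region_action_reset:
  assumes "region_action TA R0 a R'" "R0 \<in> regions k" "R' \<in> regions k" "q \<in> R0"
  shows "(delta TA (fst q) a, reset (snd q) (rho TA a)) \<in> R'"
proof -
  obtain q0 s' where q0: "q0 \<in> R0" "s' \<in> R'" "action_step TA q0 a s'"
    using assms(1) unfolding region_action_def by auto
  have s': "s' = (delta TA (fst q0) a, reset (snd q0) (rho TA a))" using q0(3) by (simp add: action_step_def)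
  have "fst q0 = fst q" "region_equiv k (snd q0) (snd q)"
    using region_members_equiv[OF assms(2) q0(1) assms(4)] by auto
  then have "(delta TA (fst q) a, reset (snd q) (rho TA a)) \<in> region_of k s'"
    unfolding mem_region_of s' using region_equiv_reset by auto
  then show ?thesis using region_eq_region_of(1)[OF assms(3) q0(2)] by simp
qed

lemma thin_no_delay:
  assumes "thin k R" "R \<in> regions k" "p \<in> R" "shift p e \<in> R" "e > 0"
  shows False
proof -
  have "region_of k (shift p e) \<noteq> region_of k p" using assms(1,3,5) unfolding thin_def by blast
  then show False using region_eq_region_of(1)[OF assms(2,3)] region_eq_region_of(1)[OF assms(2,4)] by simp
qed

text \<open>If R \<rightarrow>_{b,c} R'' then clock c is at most b throughout R: the target is thin,
  so a configuration with c > b could not reach it by a nonnegative delay.\<close>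

lemma reach_bc_clock_le:
  assumes "reach_bc k TA R b c R''" "R \<in> regions k" "R'' \<in> regions k" "s \<in> R"
  shows "snd s c \<le> b"
proof (rule ccontr)
  assume "\<not> snd s c \<le> b"
  from assms(1) have thin: "thin k R''" and reach: "reach_star k TA R R''"
    and all: "\<forall>s\<in>R. shift s (real b - snd s c) \<in> R''" unfolding reach_bc_def by auto
  from reach obtain s0 t where s0: "s0 \<in> R" "shift s0 t \<in> R''" "t \<ge> 0"
    unfolding reach_star_def delay_step_def by auto
  have "int_equiv (snd s c) (snd s0 c)" using region_members_equiv(2)[OF assms(2,4) s0(1)]
    by (simp add: region_equiv_def)
  then have "(snd s c < real b \<longleftrightarrow> snd s0 c < real b) \<and> (snd s c = real b \<longleftrightarrow> snd s0 c = real b)"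
    unfolding int_equiv_def by (metis of_int_of_nat_eq)
  then have "snd s0 c > b" using \<open>\<not> snd s c \<le> b\<close> by auto
  define p where "p = shift s0 (real b - snd s0 c)"
  have "p \<in> R''" using all s0(1) p_def by auto
  moreover have "shift p (t - real b + snd s0 c) \<in> R''" using s0(2) unfolding p_def by simp
  moreover have "t - real b + snd s0 c > 0" using s0(3) \<open>snd s0 c > b\<close> by linarith
  ultimately show False using thin_no_delay[OF thin assms(3)] by blast
qed

section \<open>Time successors\<close>

lemma time_succ_witness:
  assumes "time_succ k TA R1 R2" "R1 \<in> regions k" "R2 \<in> regions k"
  obtains x t where "x \<in> R1" "t > 0" "shift x t \<in> R2" "\<forall>u\<in>{0..t}. shift x u \<in> R1 \<union> R2"
proof -
  from assms(1) have "R1 \<noteq> R2" and reach: "reach_star k TA R1 R2"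
    and between: "\<forall>R\<in>regions k. reach_star k TA R1 R \<and> reach_star k TA R R2 \<longrightarrow> R \<in> {R1, R2}"
    unfolding time_succ_def by auto
  from reach obtain x t where x: "x \<in> R1" "shift x t \<in> R2" "t \<ge> 0"
    and valid: "snd (shift x t) \<in> valuations k" and states: "\<forall>t'\<in>{0..t}. shift x t' \<in> States TA"
    unfolding reach_star_def delay_step_def by auto
  have "t \<noteq> 0"
  proof
    assume "t = 0"
    then have "x \<in> R2" using x(2) by simp
    then show False
      using \<open>R1 \<noteq> R2\<close> region_eq_region_of(1)[OF assms(2) x(1)] region_eq_region_of(1)[OF assms(3)] by simp
  qed
  have "shift x u \<in> R1 \<union> R2" if u: "0 \<le> u" "u \<le> t" for u
  proof -
    define z where "z = shift x u"
    have "snd z \<in> valuations k"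
      unfolding z_def using shift_valuation_between[OF region_eq_region_of(2)[OF assms(2) x(1)] valid u] .
    then have z: "region_of k z \<in> regions k" "z \<in> region_of k z"
      using region_of_in_regions mem_own_region by blast+
    have "delay_step k TA x u z"
      using u \<open>snd z \<in> valuations k\<close> states unfolding delay_step_def z_def by auto
    then have "reach_star k TA R1 (region_of k z)"
      unfolding reach_star_def using x(1) z(2) u(1) by blast
    moreover have "reach_star k TA (region_of k z) R2"
    proof -
      have "delay_step k TA z (t - u) (shift x t)"
        using u valid states unfolding delay_step_def z_def by auto
      then show ?thesis unfolding reach_star_def using z(2) x(2) u(2) by (metis diff_ge_0_iff_ge)
    qed
    ultimately have "region_of k z \<in> {R1, R2}" using between z(1) by blast
    then show ?thesis using z(2) unfolding z_def by auto
  qed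
  moreover have "t > 0" using x(3) \<open>t \<noteq> 0\<close> by simp
  ultimately show thesis using that x(1,2) by auto
qed

text \<open>This lemma and the next are phrased with a delay direction
  \<sigma> = 1 resp. \<sigma> = -1, the form consumed by action_near_region_in_rclosure.\<close>

lemma time_succ_from_thin:
  assumes "time_succ k TA R'' R'''" "thin k R''" "R'' \<in> regions k" "R''' \<in> regions k"
  shows "\<exists>x\<in>R''. \<exists>t>0. \<forall>u. 0 < u \<and> u \<le> t \<longrightarrow> shift x (1 * u) \<in> R'''"
proof -
  obtain x t where x: "x \<in> R''" "t > 0" and path: "\<forall>u\<in>{0..t}. shift x u \<in> R'' \<union> R'''"
    using time_succ_witness[OF assms(1,3,4)] by blast
  have "shift x u \<in> R'''" if "0 < u" "u \<le> t" for u
  proof -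
    have "shift x u \<in> R'' \<union> R'''" using path that by auto
    moreover have "shift x u \<notin> R''" using thin_no_delay[OF assms(2,3) x(1)] that(1) by blast
    ultimately show ?thesis by blast
  qed
  then show ?thesis using x by auto
qed

lemma time_succ_into_thin:
  assumes "time_succ k TA R''' R''" "thin k R''" "R'' \<in> regions k" "R''' \<in> regions k"
  shows "\<exists>y\<in>R''. \<exists>t>0. \<forall>v. 0 < v \<and> v \<le> t \<longrightarrow> shift y (- 1 * v) \<in> R'''"
proof -
  obtain x t where x: "t > 0" "shift x t \<in> R''" and path: "\<forall>u\<in>{0..t}. shift x u \<in> R''' \<union> R''"
    using time_succ_witness[OF assms(1,4,3)] by blast
  have "shift (shift x t) (- 1 * v) \<in> R'''" if v: "0 < v" "v \<le> t" for v
  proof -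
    have "shift x (t - v) \<in> R''' \<union> R''" using path v by auto
    moreover have "shift x (t - v) \<notin> R''"
      using thin_no_delay[OF assms(2,3), of "shift x (t - v)" v] x(2) v(1) by auto
    moreover have "shift (shift x t) (- 1 * v) = shift x (t - v)" by simp
    ultimately show ?thesis by auto
  qed
  then show ?thesis using x by blast
qed

section \<open>Successors of moves lie in the closure of the target region\<close>

lemma reset_in_rclosure:
  assumes "\<epsilon> > 0" "\<And>u. 0 < u \<Longrightarrow> u < \<epsilon> \<Longrightarrow> (l, reset (snd (shift p (\<sigma> * u))) C) \<in> R'"
  shows "(l, reset (snd p) C) \<in> rclosure R'"
proof -
  define g where "g = (\<lambda>u::real. reset (\<lambda>c. snd p c + \<sigma> * u) C)"
  have cont: "continuous_on UNIV g" unfolding g_def reset_def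
    by (intro continuous_on_coordinatewise_then_product, case_tac "i \<in> C") (auto intro!: continuous_intros)
  have near: "g ` {0<..<\<epsilon>} \<subseteq> closure {\<nu>'. (l, \<nu>') \<in> R'}"
    using assms(2) closure_subset unfolding g_def by (fastforce simp: snd_shift)
  have "g ` closure {0<..<\<epsilon>} \<subseteq> closure {\<nu>'. (l, \<nu>') \<in> R'}"
    by (rule image_closure_subset[OF continuous_on_subset[OF cont] _ near]) auto
  moreover have "0 \<in> closure {0<..<\<epsilon>}" using assms(1) by simp
  moreover have "g 0 = reset (snd p) C" unfolding g_def by simp
  ultimately show ?thesis unfolding rclosure_def by force
qed

lemma delay_into_region_transfer:
  fixes x p :: "'l \<times> ('c::finite \<Rightarrow> real)"
  assumes "R'' \<in> regions k" "R''' \<in> regions k" "x \<in> R''" "p \<in> R''" "t > 0" "\<bar>\<sigma>\<bar> = 1"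
    "\<forall>u. 0 < u \<and> u \<le> t \<longrightarrow> shift x (\<sigma> * u) \<in> R'''"
  shows "\<exists>\<epsilon>>0. \<forall>u. 0 < u \<and> u < \<epsilon> \<longrightarrow> shift p (\<sigma> * u) \<in> R'''"
proof -
  have equiv: "fst x = fst p" "region_equiv k (snd x) (snd p)" using region_members_equiv[OF assms(1,3,4)] by auto
  obtain \<delta> where \<delta>: "\<delta> > 0" "\<And>u. \<bar>u\<bar> < \<delta> \<and> (\<lambda>c. snd x c + u) \<in> valuations k
           \<Longrightarrow> region_equiv k (\<lambda>c. snd x c + u) (\<lambda>c. snd p c + u)"
    using region_equiv_delay[OF equiv(2)] by blast
  show ?thesis
  proof (intro exI[of _ "min \<delta> t"] conjI allI impI)
    show "min \<delta> t > 0" using \<delta>(1) assms(5) by simp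
    fix u assume u: "0 < u \<and> u < min \<delta> t"
    have x_in: "shift x (\<sigma> * u) \<in> R'''" using assms(7) u by auto
    have "(\<lambda>c. snd x c + \<sigma> * u) \<in> valuations k"
      using region_eq_region_of(2)[OF assms(2) x_in] by (simp add: snd_shift)
    moreover have "\<bar>\<sigma> * u\<bar> = u" using assms(6) u by (simp add: abs_mult)
    ultimately have "region_equiv k (\<lambda>c. snd x c + \<sigma> * u) (\<lambda>c. snd p c + \<sigma> * u)"
      using \<delta>(2)[of "\<sigma> * u"] u by auto
    then have "shift p (\<sigma> * u) \<in> region_of k (shift x (\<sigma> * u))"
      unfolding mem_region_of using equiv(1) by (simp add: snd_shift)
    then show "shift p (\<sigma> * u) \<in> R'''" using region_eq_region_of(1)[OF assms(2) x_in] by simp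
  qed
qed

lemma action_near_region_in_rclosure:
  fixes p x :: "'l \<times> ('c::finite \<Rightarrow> real)"
  assumes "R'' \<in> regions k" "R''' \<in> regions k" "R' \<in> regions k" "region_action TA R''' a R'"
    "p \<in> R''" "x \<in> R''" "t > 0" "\<bar>\<sigma>\<bar> = 1" "\<forall>u. 0 < u \<and> u \<le> t \<longrightarrow> shift x (\<sigma> * u) \<in> R'''"
  shows "(delta TA (fst p) a, reset (snd p) (rho TA a)) \<in> rclosure R'"
proof -
  obtain \<epsilon> where \<epsilon>: "\<epsilon> > 0" "\<forall>u. 0 < u \<and> u < \<epsilon> \<longrightarrow> shift p (\<sigma> * u) \<in> R'''"
    using delay_into_region_transfer[OF assms(1,2,6,5,7,8,9)] by blast
  show ?thesis
  proof (rule reset_in_rclosure[OF \<epsilon>(1)])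
    fix u :: real assume "0 < u" "u < \<epsilon>"
    then have "shift p (\<sigma> * u) \<in> R'''" using \<epsilon>(2) by blast
    from region_action_reset[OF assms(4,2,3) this]
    show "(delta TA (fst p) a, reset (snd (shift p (\<sigma> * u))) (rho TA a)) \<in> R'" by simp
  qed
qed

text \<open>Along a move (R, (a,b,c), R'), every s \<in> R waits exactly b - s(c), and the
  resulting successor lies in the closure of R' (in R' itself for moves of the
  first kind, on its boundary for the other two kinds).\<close>

lemma move_successor:
  fixes TA :: "('l, 'c::finite, 'a) timed_automaton"
  assumes "(R, (a, b, c), R') \<in> moves k TA Lmin" "s \<in> R"
  shows "snd s c \<le> b" "succ_alpha TA s (a, b, c) \<in> rclosure R'"
proof -
  from assms(1) have R: "R \<in> regions k" "R' \<in> regions k" and kinds: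
    "(\<exists>R''\<in>regions k. reach_bc k TA R b c R'' \<and> region_action TA R'' a R')
    \<or> (\<exists>R''\<in>regions k. \<exists>R'''\<in>regions k.
          reach_bc k TA R b c R'' \<and> time_succ k TA R'' R''' \<and> region_action TA R''' a R')
    \<or> (\<exists>R''\<in>regions k. \<exists>R'''\<in>regions k.
          reach_bc k TA R b c R'' \<and> time_succ k TA R''' R'' \<and> region_action TA R''' a R')"
    unfolding moves_def by blast+
  then obtain R'' where R'': "R'' \<in> regions k" "reach_bc k TA R b c R''" by blast
  show le: "snd s c \<le> b" using reach_bc_clock_le[OF R''(2) R(1) R''(1) assms(2)] .
  define p where "p = shift s (real b - snd s c)"
  have succ_p: "succ_alpha TA s (a, b, c) = (delta TA (fst p) a, reset (snd p) (rho TA a))"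
    unfolding succ_alpha_def succ_def tdelay_def p_def using le by simp
  have p_in: "p \<in> R2" if "reach_bc k TA R b c R2" for R2
    using that assms(2) unfolding reach_bc_def p_def by blast
  from kinds show "succ_alpha TA s (a, b, c) \<in> rclosure R'"
  proof (elim disjE bexE conjE)
    fix R2 assume "R2 \<in> regions k" "reach_bc k TA R b c R2" "region_action TA R2 a R'"
    moreover have "R' \<subseteq> rclosure R'" unfolding rclosure_def using closure_subset by fastforce
    ultimately show ?thesis unfolding succ_p using region_action_reset[of TA R2 a R' k p] p_in R by auto
  next
    fix R2 R3 assume h: "R2 \<in> regions k" "R3 \<in> regions k" "reach_bc k TA R b c R2"
      "time_succ k TA R2 R3" "region_action TA R3 a R'"
    have "thin k R2" using h(3) by (simp add: reach_bc_def)
    then obtain x t where x: "x \<in> R2" "t > 0" "\<forall>u. 0 < u \<and> u \<le> t \<longrightarrow> shift x (1 * u) \<in> R3"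
      using time_succ_from_thin[OF h(4) _ h(1,2)] by blast
    show ?thesis unfolding succ_p
      by (rule action_near_region_in_rclosure[OF h(1,2) R(2) h(5) p_in[OF h(3)] x(1,2) _ x(3)]) simp
  next
    fix R2 R3 assume h: "R2 \<in> regions k" "R3 \<in> regions k" "reach_bc k TA R b c R2"
      "time_succ k TA R3 R2" "region_action TA R3 a R'"
    have "thin k R2" using h(3) by (simp add: reach_bc_def)
    then obtain x t where x: "x \<in> R2" "t > 0" "\<forall>u. 0 < u \<and> u \<le> t \<longrightarrow> shift x (- 1 * u) \<in> R3"
      using time_succ_into_thin[OF h(4) _ h(1,2)] by blast
    show ?thesis unfolding succ_p
      by (rule action_near_region_in_rclosure[OF h(1,2) R(2) h(5) p_in[OF h(3)] x(1,2) _ x(3)]) simp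
  qed
qed

section \<open>Values of moves and optimal moves\<close>

lemma move_value_normal_form:
  fixes TA :: "('l, 'c::finite, 'a) timed_automaton"
  assumes "(R, (a, b, c), R') \<in> moves k TA Lmin" "regionally_simple k T" "regionally_constant_fun k D"
  shows "\<exists>(E::int) C d. \<forall>s\<in>R. move_value TA T D s (R, (a, b, c), R') = (ereal (real_of_int E - snd s C), d)"
proof -
  have "R' \<in> regions k" using assms(1) unfolding moves_def by blast
  then obtain d where d: "\<forall>s\<in>rclosure R'. D R' s = d"
    using assms(3) unfolding regionally_constant_fun_def by blast
  let ?succ = "\<lambda>s. succ_alpha TA s (a, b, c)"
  have succ_clock: "snd (?succ s) c' = (if c' \<in> rho TA a then 0 else snd s c' + (real b - snd s c))"
    if "s \<in> R" for s c'
    using move_successor(1)[OF assms(1) that]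
    by (simp add: succ_alpha_def succ_def tdelay_def reset_def snd_shift)
  have value_eq: "move_value TA T D s (R, (a, b, c), R') = (ereal (real b - snd s c) + T R' (?succ s), 1 + d)"
    if "s \<in> R" for s
    using move_successor[OF assms(1) that] d
    by (simp add: move_value_def oplus_def boxplus_def tdelay_def)
  from assms(2) \<open>R' \<in> regions k\<close>
  consider (const) e :: int where "\<forall>s\<in>rclosure R'. T R' s = ereal (real_of_int e)"
    | (linear) e :: int and c' where "\<forall>s\<in>rclosure R'. T R' s = ereal (real_of_int e - snd s c')"
    unfolding regionally_simple_def by blast
  then show ?thesis
  proof cases
    case const
    have "move_value TA T D s (R, (a, b, c), R') = (ereal (real_of_int (int b + e) - snd s c), 1 + d)"
      if "s \<in> R" for s
      using value_eq[OF that] const move_successor(2)[OF assms(1) that] by simp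
    then show ?thesis by blast
  next
    case linear
    show ?thesis
    proof (cases "c' \<in> rho TA a")
      case True
      have "move_value TA T D s (R, (a, b, c), R') = (ereal (real_of_int (int b + e) - snd s c), 1 + d)"
        if "s \<in> R" for s
        using value_eq[OF that] linear move_successor(2)[OF assms(1) that] succ_clock[OF that, of c'] True
        by simp
      then show ?thesis by blast
    next
      case False
      have "move_value TA T D s (R, (a, b, c), R') = (ereal (real_of_int e - snd s c'), 1 + d)"
        if "s \<in> R" for s
        using value_eq[OF that] linear move_successor(2)[OF assms(1) that] succ_clock[OF that, of c'] False
        by simp
      then show ?thesis by blast
    qed
  qed
qed

text \<open>Comparing the values of two moves from the same region reduces to comparing
  a clock difference with an integer, which is uniform on the region.\<close>

lemma move_value_comparison_uniform:
  fixes TA :: "('l, 'c::finite, 'a) timed_automaton"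
  assumes "m \<in> moves k TA Lmin" "m' \<in> moves k TA Lmin" "fst m = R" "fst m' = R"
    "R \<in> regions k" "s \<in> R" "s' \<in> R"
    "regionally_simple k T" "regionally_constant_fun k D"
  shows "lex_le (move_value TA T D s m) (move_value TA T D s m') \<longleftrightarrow>
         lex_le (move_value TA T D s' m) (move_value TA T D s' m')"
proof -
  obtain a b c R1 where m: "m = (R, (a, b, c), R1)" using assms(3) by (cases m) auto
  obtain a' b' c' R2 where m': "m' = (R, (a', b', c'), R2)" using assms(4) by (cases m') auto
  obtain E1 C1 d1 where v1: "\<forall>s\<in>R. move_value TA T D s m = (ereal (real_of_int E1 - snd s C1), d1)"
    using move_value_normal_form[OF assms(1)[unfolded m] assms(8,9)] m by blast
  obtain E2 C2 d2 where v2: "\<forall>s\<in>R. move_value TA T D s m' = (ereal (real_of_int E2 - snd s C2), d2)"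
    using move_value_normal_form[OF assms(2)[unfolded m'] assms(8,9)] m' by blast
  have "int_equiv (snd s C2 - snd s C1) (snd s' C2 - snd s' C1)"
    using region_members_equiv(2)[OF assms(5,6,7)] by (simp add: region_equiv_def)
  then have uniform: "snd s C2 - snd s C1 < of_int (E2 - E1) \<longleftrightarrow> snd s' C2 - snd s' C1 < of_int (E2 - E1)"
    "snd s C2 - snd s C1 = of_int (E2 - E1) \<longleftrightarrow> snd s' C2 - snd s' C1 = of_int (E2 - E1)"
    unfolding int_equiv_def by blast+
  have less: "real_of_int E1 - x C1 < real_of_int E2 - x C2 \<longleftrightarrow> x C2 - x C1 < of_int (E2 - E1)"
    and equal: "real_of_int E1 - x C1 = real_of_int E2 - x C2 \<longleftrightarrow> x C2 - x C1 = of_int (E2 - E1)"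
    for x :: "'c \<Rightarrow> real" by auto
  show ?thesis
    using v1 v2 assms(6,7) uniform unfolding lex_le_def by (simp add: less equal)
qed

lemma M_star_uniform:
  fixes TA :: "('l, 'c::finite, 'a) timed_automaton"
  assumes "M' \<subseteq> moves k TA Lmin" "regionally_simple k T" "regionally_constant_fun k D"
    "R \<in> regions k" "s \<in> R" "s' \<in> R"
  shows "M_star k TA M' T D s = M_star k TA M' T D s'"
proof -
  have same_region: "region_of k s = R" "region_of k s' = R"
    using region_eq_region_of(1)[OF assms(4)] assms(5,6) by auto
  show ?thesis
    unfolding M_star_def same_region
  proof (intro Collect_cong conj_cong refl ball_cong imp_cong)
    fix m m' assume "m \<in> M'" "fst m = R" "m' \<in> M'" "fst m' = R"
    then show "lex_le (move_value TA T D s m) (move_value TA T D s m') \<longleftrightarrow>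
         lex_le (move_value TA T D s' m) (move_value TA T D s' m')"
      using move_value_comparison_uniform[of m k TA Lmin m' R s s' T D] assms by blast
  qed
qed

theorem mainTheorem15:
  fixes k :: nat
    and TA :: "('l::finite, 'c::finite, 'a::finite) timed_automaton"
    and Lmin :: "'l set"
    and M' :: "('l,'c,'a) move set"
    and Choose :: "('l,'c,'a) move set \<Rightarrow> ('l,'c,'a) move"
    and \<mu> :: "('l,'c) config \<Rightarrow> ('l,'c,'a) move"
    and T :: "('l,'c) region \<Rightarrow> ('l,'c) config \<Rightarrow> ereal"
    and D :: "('l,'c) region \<Rightarrow> ('l,'c) config \<Rightarrow> enat"
  assumes "valid_ta k TA"
    and "M' \<subseteq> moves k TA Lmin"
    and "\<forall>X. X \<noteq> {} \<longrightarrow> Choose X \<in> X"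
    and "min_strategy k TA Lmin M' \<mu>"
    and "regionally_constant_strategy k TA Lmin \<mu>"
    and "regionally_simple k T"
    and "regionally_constant_fun k D"
  shows "regionally_constant_strategy k TA Lmin (improve_min k TA M' Choose \<mu> T D)"
  unfolding regionally_constant_strategy_def
proof (intro ballI impI)
  fix s s' assume s: "s \<in> S_Min TA Lmin" "s' \<in> S_Min TA Lmin" and same: "region_of k s = region_of k s'"
  have "\<mu> s = \<mu> s'" using assms(5) s same unfolding regionally_constant_strategy_def by blast
  moreover have val: "snd s \<in> valuations k" "snd s' \<in> valuations k"
    using states_in_valuations[OF assms(1)] s by (auto simp: S_Min_def)
  have "region_of k s \<in> regions k" "s \<in> region_of k s" "s' \<in> region_of k s"
    using region_of_in_regions[OF val(1)] mem_own_region[OF val(1)] mem_own_region[OF val(2)] same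
    by simp_all
  then have "M_star k TA M' T D s = M_star k TA M' T D s'"
    by (rule M_star_uniform[OF assms(2,6,7)])
  ultimately show "improve_min k TA M' Choose \<mu> T D s = improve_min k TA M' Choose \<mu> T D s'"
    unfolding improve_min_def by simp
qed

end
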